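(* Assume the capacities satisfy (C1). Let $M_0$ be uniform on $\{1,\dots,N\}$ and $M_1,M_2,\dots$ i.i.d., independent of $M_0$, with $\mathbb P(M_v=m)=\lambda_m/l_N$, $1\le m\le N$, and set $Y_v=\mathbf 1\{\bigcup_{w=0}^{v-1}\{M_v=M_w\}\}$ for $v\ge1$. Then for each $\delta\in(-1/2,1/2)$, $u\ge0$ and $v\le N^{1/2+\delta}$, $$\mathbb P\Big(\sum_{w=1}^vY_w\ge N^u\Big)=O\big(N^{-(u-2\delta)}\big).$$
   Context: Capacities $\lambda_1,\dots,\lambda_N>0$ deterministic; $l_N=\sum_i\lambda_i$, $\mu_N=\frac1N\sum_i\lambda_i$, $\nu_N=\sum_i\lambda_i^2/\sum_i\lambda_i$. (C1): there are $\mu\in(0,\infty)$, $\nu\in(1,\infty)$, $\alpha_1>0$ with $|\mu_N-\mu|=O(N^{-\alpha_1})$ and $|\nu_N-\nu|=O(N^{-\alpha_1})$. *)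

theory Defs
  imports "HOL-Probability.Probability" "HOL-Library.Landau_Symbols"
begin

text \<open>Capacities: lam N i is the capacity of node i (1 \<le> i \<le> N) in the system of size N.\<close>

definition l_N :: "(nat \<Rightarrow> nat \<Rightarrow> real) \<Rightarrow> nat \<Rightarrow> real" where
  "l_N lam N = (\<Sum>i=1..N. lam N i)"

definition mu_N :: "(nat \<Rightarrow> nat \<Rightarrow> real) \<Rightarrow> nat \<Rightarrow> real" where
  "mu_N lam N = l_N lam N / real N"

definition nu_N :: "(nat \<Rightarrow> nat \<Rightarrow> real) \<Rightarrow> nat \<Rightarrow> real" where
  "nu_N lam N = (\<Sum>i=1..N. (lam N i)\<^sup>2) / l_N lam N"

definition C1 :: "(nat \<Rightarrow> nat \<Rightarrow> real) \<Rightarrow> bool" where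
  "C1 lam \<longleftrightarrow> (\<exists>\<mu> \<nu> \<alpha>1. \<mu> > 0 \<and> \<nu> > 1 \<and> \<alpha>1 > 0 \<and>
      (\<lambda>N. mu_N lam N - \<mu>) \<in> O(\<lambda>N. real N powr (- \<alpha>1)) \<and>
      (\<lambda>N. nu_N lam N - \<nu>) \<in> O(\<lambda>N. real N powr (- \<alpha>1)))"

definition cap_pmf :: "(nat \<Rightarrow> nat \<Rightarrow> real) \<Rightarrow> nat \<Rightarrow> nat pmf" where
  "cap_pmf lam N = embed_pmf (\<lambda>m. if m \<in> {1..N} then lam N m / l_N lam N else 0)"

text \<open>Joint law of (M_0, ..., M_v): M_0 uniform on {1..N}, M_1..M_v i.i.d. cap_pmf,
  all independent (product measure). Coordinates outside {0..v} are fixed to 0.\<close>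
definition M_pmf :: "(nat \<Rightarrow> nat \<Rightarrow> real) \<Rightarrow> nat \<Rightarrow> nat \<Rightarrow> (nat \<Rightarrow> nat) pmf" where
  "M_pmf lam N v = Pi_pmf {0..v} 0
     (\<lambda>w. if w = 0 then pmf_of_set {1..N} else cap_pmf lam N)"

definition Y :: "(nat \<Rightarrow> nat) \<Rightarrow> nat \<Rightarrow> real" where
  "Y M w = (if \<exists>w'<w. M w = M w' then 1 else 0)"

end

theory Submission
  imports Defs
begin

text \<open>Each \<open>Y w\<close> is at most the number of \<open>w' < w\<close> with \<open>M w = M w'\<close>, so by Markov's
  inequality the probability is at most \<open>v\<^sup>2 / N powr u\<close> times the largest probability that
  two fixed coordinates coincide. That probability is \<open>1 / N\<close> when \<open>M 0\<close> is involved and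
  \<open>\<Sum>\<lambda>\<^sub>i\<^sup>2 / l\<^sub>N\<^sup>2 = \<nu>\<^sub>N / (\<mu>\<^sub>N N)\<close> otherwise, hence \<open>O(1 / N)\<close> under (C1). Since
  \<open>v\<^sup>2 \<le> N powr (1 + 2\<delta>)\<close>, the bound is \<open>O(N powr (2\<delta> - u))\<close>.\<close>

lemma l_N_pos:
  assumes "\<And>i. 1 \<le> i \<Longrightarrow> i \<le> N \<Longrightarrow> lam N i > 0" and "N \<ge> 1"
  shows "l_N lam N > 0"
  unfolding l_N_def using assms by (intro sum_pos) auto

lemma pmf_cap_pmf:
  assumes pos: "\<And>i. 1 \<le> i \<Longrightarrow> i \<le> N \<Longrightarrow> lam N i > 0" and N: "N \<ge> 1"
  shows "pmf (cap_pmf lam N) m = (if m \<in> {1..N} then lam N m / l_N lam N else 0)"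
  unfolding cap_pmf_def
proof (rule pmf_embed_pmf)
  have l_pos: "l_N lam N > 0"
    using pos N by (rule l_N_pos)
  show "\<And>x. 0 \<le> (if x \<in> {1..N} then lam N x / l_N lam N else 0)"
    using l_pos pos by (auto intro!: divide_nonneg_pos less_imp_le)
  have "(\<integral>\<^sup>+x. ennreal (if x \<in> {1..N} then lam N x / l_N lam N else 0) \<partial>count_space UNIV)
     = (\<Sum>x\<in>{1..N}. ennreal (lam N x / l_N lam N))"
    by (subst nn_integral_count_space'[of "{1..N}"]) auto
  also have "\<dots> = ennreal (\<Sum>x\<in>{1..N}. lam N x / l_N lam N)"
    using l_pos pos by (subst sum_ennreal) (auto intro!: divide_nonneg_pos less_imp_le)
  also have "(\<Sum>x\<in>{1..N}. lam N x / l_N lam N) = 1"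
    using l_pos by (simp add: sum_divide_distrib[symmetric] l_N_def)
  finally show "(\<integral>\<^sup>+x. ennreal (if x \<in> {1..N} then lam N x / l_N lam N else 0) \<partial>count_space UNIV) = 1"
    by simp
qed

lemma set_pmf_cap_pmf:
  assumes "\<And>i. 1 \<le> i \<Longrightarrow> i \<le> N \<Longrightarrow> lam N i > 0" and "N \<ge> 1"
  shows "set_pmf (cap_pmf lam N) \<subseteq> {1..N}"
  using pmf_cap_pmf[of N lam, OF assms] by (auto simp: set_pmf_eq split: if_splits)

lemma map_pmf_Pi_pmf_pair:
  assumes "finite A" "w \<in> A" "w' \<in> A" "w \<noteq> w'"
  shows "map_pmf (\<lambda>f. (f w, f w')) (Pi_pmf A d p) = pair_pmf (p w) (p w')"
proof -
  have A: "A = insert w (A - {w})"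
    using assms by auto
  have "Pi_pmf A d p = map_pmf (\<lambda>(y, f). f(w := y)) (pair_pmf (p w) (Pi_pmf (A - {w}) d p))"
    by (subst A, rule Pi_pmf_insert) (use assms in auto)
  then have "map_pmf (\<lambda>f. (f w, f w')) (Pi_pmf A d p)
      = map_pmf (\<lambda>(a, b). (id a, b w')) (pair_pmf (p w) (Pi_pmf (A - {w}) d p))"
    using assms by (simp add: map_pmf_comp case_prod_unfold)
  also have "\<dots> = pair_pmf (map_pmf id (p w)) (map_pmf (\<lambda>f. f w') (Pi_pmf (A - {w}) d p))"
    by (rule map_pair)
  also have "map_pmf (\<lambda>f. f w') (Pi_pmf (A - {w}) d p) = p w'"
    using assms by (subst Pi_pmf_component) auto
  finally show ?thesis
    by simp
qed

lemma measure_pair_pmf_diagonal: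
  assumes "set_pmf p \<subseteq> S" and "finite S"
  shows "measure_pmf.prob (pair_pmf p q) {(a, b). a = b} = (\<Sum>m\<in>S. pmf p m * pmf q m)"
proof -
  let ?pq = "pair_pmf p q"
  have "{(a, b). a = b} \<inter> set_pmf ?pq = (\<lambda>m. (m, m)) ` S \<inter> set_pmf ?pq"
    using assms(1) by auto
  then have "measure_pmf.prob ?pq {(a, b). a = b} = measure_pmf.prob ?pq ((\<lambda>m. (m, m)) ` S)"
    by (metis measure_Int_set_pmf)
  also have "\<dots> = (\<Sum>m\<in>S. pmf p m * pmf q m)"
    using assms(2) by (simp add: measure_measure_pmf_finite sum.reindex inj_on_def pmf_pair)
  finally show ?thesis .
qed

lemma measure_Pi_pmf_coincide:
  assumes "finite A" "w \<in> A" "w' \<in> A" "w \<noteq> w'" "set_pmf (p w) \<subseteq> S" "finite S"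
  shows "measure_pmf.prob (Pi_pmf A d p) {f. f w = f w'} = (\<Sum>m\<in>S. pmf (p w) m * pmf (p w') m)"
proof -
  have "measure_pmf.prob (Pi_pmf A d p) {f. f w = f w'}
      = measure_pmf.prob (map_pmf (\<lambda>f. (f w, f w')) (Pi_pmf A d p)) {(a, b). a = b}"
    by (simp add: vimage_def)
  also have "\<dots> = (\<Sum>m\<in>S. pmf (p w) m * pmf (p w') m)"
    using assms by (simp add: map_pmf_Pi_pmf_pair measure_pair_pmf_diagonal)
  finally show ?thesis .
qed

lemma M_pmf_coincide_le:
  assumes pos: "\<And>i. 1 \<le> i \<Longrightarrow> i \<le> N \<Longrightarrow> lam N i > 0" and N: "N \<ge> 1"
    and ww': "w' < w" "w \<le> v"
  shows "measure_pmf.prob (M_pmf lam N v) {f. f w = f w'} \<le> max (1 / real N) (nu_N lam N / l_N lam N)"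
proof -
  define p where "p = (\<lambda>x::nat. if x = 0 then pmf_of_set {1..N} else cap_pmf lam N)"
  have pmf_cap: "pmf (cap_pmf lam N) m = lam N m / l_N lam N" if "m \<in> {1..N}" for m
    using that by (simp add: pmf_cap_pmf[of N lam, OF pos N])
  have prob_eq: "measure_pmf.prob (M_pmf lam N v) {f. f w = f w'}
      = (\<Sum>m\<in>{1..N}. lam N m / l_N lam N * pmf (p w') m)"
    unfolding M_pmf_def p_def[symmetric]
    using ww' set_pmf_cap_pmf[of N lam, OF pos N]
    by (subst measure_Pi_pmf_coincide[where S = "{1..N}"])
      (auto simp: p_def pmf_cap intro!: sum.cong)
  show ?thesis
  proof (cases "w' = 0")
    case True
    have "measure_pmf.prob (M_pmf lam N v) {f. f w = f w'}
        = (\<Sum>m\<in>{1..N}. lam N m) / l_N lam N / real N"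
      unfolding prob_eq using True by (simp add: p_def sum_divide_distrib)
    also have "\<dots> = 1 / real N"
      using l_N_pos[of N lam, OF pos N] by (simp add: l_N_def)
    finally show ?thesis
      by simp
  next
    case False
    then have "measure_pmf.prob (M_pmf lam N v) {f. f w = f w'}
        = (\<Sum>m\<in>{1..N}. (lam N m)\<^sup>2) / l_N lam N / l_N lam N"
      by (simp add: prob_eq p_def pmf_cap sum_divide_distrib power2_eq_square)
    also have "\<dots> = nu_N lam N / l_N lam N"
      by (simp add: nu_N_def)
    finally show ?thesis
      by simp
  qed
qed

lemma Y_le_coincidences: "Y M w \<le> (\<Sum>w'<w. indicator {f. f w = f w'} M)"
proof (cases "\<exists>w'<w. M w = M w'")
  case True
  then obtain w' where "w' < w" "M w = M w'"
    by blast
  then have "indicator {f. f w = f w'} M \<le> (\<Sum>w'<w. indicator {f. f w = f w'} M :: real)"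
    by (intro member_le_sum) auto
  with True \<open>M w = M w'\<close> show ?thesis
    by (simp add: Y_def)
qed (simp add: Y_def sum_nonneg)

lemma prob_sum_Y_ge_le:
  fixes P :: "(nat \<Rightarrow> nat) pmf"
  assumes "a > 0" and "B \<ge> 0"
    and coincide: "\<And>w w'. w' < w \<Longrightarrow> w \<le> v \<Longrightarrow> measure_pmf.prob P {f. f w = f w'} \<le> B"
  shows "measure_pmf.prob P {M. (\<Sum>w=1..v. Y M w) \<ge> a} \<le> (real v)\<^sup>2 * B / a"
proof -
  define T :: "(nat \<Rightarrow> nat) \<Rightarrow> real"
    where "T = (\<lambda>f. \<Sum>w=1..v. \<Sum>w'<w. indicator {f. f w = f w'} f)"
  have "measure_pmf.prob P {M. (\<Sum>w=1..v. Y M w) \<ge> a}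
      \<le> measure_pmf.prob P {M \<in> space (measure_pmf P). T M \<ge> a}"
    unfolding T_def
    by (intro measure_pmf.finite_measure_mono) (auto intro: order.trans sum_mono Y_le_coincidences)
  also have "\<dots> \<le> (\<integral>M. T M \<partial>P) / a"
    using \<open>a > 0\<close> unfolding T_def
    by (intro integral_Markov_inequality_measure[where A = UNIV])
      (auto intro!: sum_nonneg Bochner_Integration.integrable_sum integrable_real_indicator
        simp: less_top[symmetric])
  also have "(\<integral>M. T M \<partial>P) = (\<Sum>w=1..v. \<Sum>w'<w. measure_pmf.prob P {f. f w = f w'})"
    unfolding T_def
    by (simp add: Bochner_Integration.integral_sum integrable_real_indicator less_top[symmetric])
  also have "\<dots> \<le> (\<Sum>w=1..v. \<Sum>w'<w. B)"
    by (intro sum_mono coincide) auto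
  also have "\<dots> \<le> (\<Sum>w=1..v. real v * B)"
    using \<open>B \<ge> 0\<close> by (intro sum_mono) (auto intro: mult_right_mono)
  also have "\<dots> = (real v)\<^sup>2 * B"
    by (simp add: power2_eq_square)
  finally show ?thesis
    using \<open>a > 0\<close> by (simp add: divide_right_mono)
qed

lemma tendsto_of_bigo_powr_neg:
  fixes f :: "nat \<Rightarrow> real"
  assumes "(\<lambda>N. f N - c) \<in> O(\<lambda>N. real N powr (- \<alpha>))" and "\<alpha> > 0"
  shows "f \<longlonglongrightarrow> c"
proof -
  have "(\<lambda>N. real N powr (- \<alpha>)) \<in> o(\<lambda>_. 1)"
    using assms(2)
    by (intro smalloI_tendsto) (auto intro!: tendsto_neg_powr filterlim_real_sequentially)
  with assms(1) have "(\<lambda>N. f N - c) \<in> o(\<lambda>_. 1)"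
    by (rule landau_o.big_small_trans)
  then show ?thesis
    using smalloD_tendsto LIM_zero_cancel by fastforce
qed

lemma C1_coincide_bound:
  assumes "C1 lam"
  obtains K where "K \<ge> 0"
    and "eventually (\<lambda>N. N \<ge> 1 \<and> max (1 / real N) (nu_N lam N / l_N lam N) \<le> K / real N) sequentially"
proof -
  obtain \<mu> \<nu> \<alpha> where \<mu>: "\<mu> > 0" and \<nu>: "\<nu> > 1" and "\<alpha> > 0"
    and "(\<lambda>N. mu_N lam N - \<mu>) \<in> O(\<lambda>N. real N powr (- \<alpha>))"
    and "(\<lambda>N. nu_N lam N - \<nu>) \<in> O(\<lambda>N. real N powr (- \<alpha>))"
    using assms unfolding C1_def by blast
  then have "mu_N lam \<longlonglongrightarrow> \<mu>" and "nu_N lam \<longlonglongrightarrow> \<nu>"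
    by (auto intro: tendsto_of_bigo_powr_neg)
  then have "eventually (\<lambda>N. mu_N lam N > \<mu> / 2 \<and> nu_N lam N < \<nu> + 1 \<and> N \<ge> 1) sequentially"
    using \<mu> by (intro eventually_conj order_tendstoD eventually_ge_at_top) auto
  then have "eventually (\<lambda>N. N \<ge> 1 \<and> max (1 / real N) (nu_N lam N / l_N lam N)
      \<le> max 1 (2 * (\<nu> + 1) / \<mu>) / real N) sequentially"
  proof eventually_elim
    case (elim N)
    then have l_N: "l_N lam N = mu_N lam N * real N" and "real N \<ge> 1"
      by (auto simp: mu_N_def)
    have "nu_N lam N / l_N lam N \<le> (\<nu> + 1) / (\<mu> / 2 * real N)"
      using elim \<mu> \<nu> \<open>real N \<ge> 1\<close> unfolding l_N
      by (intro frac_le mult_right_mono) auto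
    also have "\<dots> = 2 * (\<nu> + 1) / \<mu> / real N"
      by (simp add: field_simps)
    also have "\<dots> \<le> max 1 (2 * (\<nu> + 1) / \<mu>) / real N"
      by (intro divide_right_mono) auto
    finally show ?case
      using elim by (auto intro: divide_right_mono)
  qed
  then show ?thesis
    by (intro that[of "max 1 (2 * (\<nu> + 1) / \<mu>)"]) auto
qed

lemma powr_bound_rescale:
  fixes N v K u \<delta> :: real
  assumes "N > 0" "0 \<le> v" "v \<le> N powr (1/2 + \<delta>)" "K \<ge> 0"
  shows "v\<^sup>2 * (K / N) / N powr u \<le> K * N powr (- (u - 2 * \<delta>))"
proof -
  have "v\<^sup>2 * (K / N) / N powr u \<le> (N powr (1/2 + \<delta>))\<^sup>2 * (K / N) / N powr u"
    using assms by (intro divide_right_mono mult_right_mono power_mono) auto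
  also have "(N powr (1/2 + \<delta>))\<^sup>2 = N powr (1 + 2 * \<delta>)"
    using assms(1) by (simp add: power2_eq_square powr_add[symmetric])
  also have "\<dots> = N * N powr (2 * \<delta>)"
    using assms(1) by (simp add: powr_add)
  also have "N * N powr (2 * \<delta>) * (K / N) / N powr u = K * N powr (- (u - 2 * \<delta>))"
    using assms(1) by (simp add: powr_diff)
  finally show ?thesis .
qed

theorem lemmaD3:
  fixes lam :: "nat \<Rightarrow> nat \<Rightarrow> real"
  assumes pos: "\<And>N i. 1 \<le> i \<Longrightarrow> i \<le> N \<Longrightarrow> lam N i > 0"
    and C1: "C1 lam"
  shows "\<forall>\<delta> u. -1/2 < \<delta> \<and> \<delta> < 1/2 \<and> u \<ge> 0 \<longrightarrow>
    (\<exists>C N0. \<forall>N\<ge>N0. \<forall>v::nat. real v \<le> real N powr (1/2 + \<delta>) \<longrightarrow>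
        measure_pmf.prob (M_pmf lam N v) {M. (\<Sum>w=1..v. Y M w) \<ge> real N powr u}
          \<le> C * real N powr (- (u - 2 * \<delta>)))"
proof (intro allI impI)
  fix \<delta> u :: real
  obtain K N0 where K: "K \<ge> 0"
    and bound: "\<And>N. N \<ge> N0 \<Longrightarrow> N \<ge> 1 \<and> max (1 / real N) (nu_N lam N / l_N lam N) \<le> K / real N"
    using C1_coincide_bound[OF C1] unfolding eventually_sequentially by metis
  have "measure_pmf.prob (M_pmf lam N v) {M. (\<Sum>w=1..v. Y M w) \<ge> real N powr u}
      \<le> K * real N powr (- (u - 2 * \<delta>))"
    if "N \<ge> N0" and v: "real v \<le> real N powr (1/2 + \<delta>)" for N v
  proof -
    have "N \<ge> 1" and B: "max (1 / real N) (nu_N lam N / l_N lam N) \<le> K / real N"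
      using bound[OF \<open>N \<ge> N0\<close>] by auto
    then have "measure_pmf.prob (M_pmf lam N v) {M. (\<Sum>w=1..v. Y M w) \<ge> real N powr u}
        \<le> (real v)\<^sup>2 * (K / real N) / real N powr u"
      using K by (intro prob_sum_Y_ge_le order.trans[OF M_pmf_coincide_le B] pos) auto
    also have "\<dots> \<le> K * real N powr (- (u - 2 * \<delta>))"
      using \<open>N \<ge> 1\<close> v K by (intro powr_bound_rescale) auto
    finally show ?thesis .
  qed
  then show "\<exists>C N0. \<forall>N\<ge>N0. \<forall>v::nat. real v \<le> real N powr (1/2 + \<delta>) \<longrightarrow>
      measure_pmf.prob (M_pmf lam N v) {M. (\<Sum>w=1..v. Y M w) \<ge> real N powr u}
        \<le> C * real N powr (- (u - 2 * \<delta>))"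
    by blast
qed

end
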